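(* Let $N>0$ be an integer. Then, as formal power series in $X,Y,Z$, \[ \Phi_0^{(N)}\left(X,Y,Z;\frac{N}{N-Y}\right) =\sum_{k,q,h>0}X^{k-q-h}Y^{q-h}Z^{h-1}\sum_{({\boldsymbol{k}};l)\in \tilde{I}_0(k,q,h)}\tilde{\zeta}^{(N)}({\boldsymbol{k}};l). \]
   Context: $(x)_m=x(x+1)\cdots(x+m-1)$ is the rising factorial, $(x)_0=1$. For ${\boldsymbol{k}}=(k_1,\ldots,k_r)\in\mathbb{Z}_{>0}^r$, $\mathrm{Li}_{\boldsymbol{k}}^{(N)}(z)=\sum_{0<m_1<\cdots<m_r<N}\frac{1}{m_1^{k_1}\cdots m_r^{k_r}}\frac{(N-m_r)_{m_r}}{(Nz^{-1}-m_r)_{m_r}}$. For integers $k,r,h>0$ let $I_0(k,r,h)$ be the set of $(k_1,\ldots,k_r)\in\mathbb{Z}_{>0}^r$ with $k_r>1$, $k_1+\cdots+k_r=k$, $\#\{i\mid k_i>1\}=h$; $G_0^{(N)}(k,r,h;z)=\sum_{{\boldsymbol{k}}\in I_0(k,r,h)}\mathrm{Li}^{(N)}_{\boldsymbol{k}}(z)$ and $\Phi_0^{(N)}(X,Y,Z;z)=\sum_{k,r,h>0}G^{(N)}_0(k,r,h;z)X^{k-r-h}Y^{r-h}Z^{h-1}$; with $z=N/(N-Y)$ the factor $1/(N-Y-m)_m$ is expanded as a power series in $Y$. For $(k_1,\ldots,k_r)\in\mathbb{Z}_{>0}^r$ and integer $l\ge0$, \[ \tilde{\zeta}^{(N)}(k_1,\ldots,k_r;l)=\sum_{0<m_1<\cdots<m_r<N}\frac{1}{m_1^{k_1}\cdots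 m_r^{k_r}}\sum_{0<n_1\le\cdots\le n_l\le m_r}\frac{1}{(N-n_1)\cdots(N-n_l)} \] (the inner sum is $1$ when $l=0$), and $\tilde{I}_0(k,q,h)$ is the set of $(k_1,\ldots,k_r;l)\in\mathbb{Z}_{>0}^r\times\mathbb{Z}_{\ge0}$ with $r>0$, $k_r>1$, $k_1+\cdots+k_r+l=k$, $r+l=q$, $\#\{i\mid k_i>1\}=h$. *)

theory Defs
  imports "HOL-Analysis.Analysis" "HOL-Computational_Algebra.Formal_Power_Series"
begin

definition incr_tuples :: "nat \<Rightarrow> nat \<Rightarrow> nat list set" where
  "incr_tuples N r = {ms. length ms = r \<and> sorted_wrt (<) ms \<and> (\<forall>m\<in>set ms. 0 < m \<and> m < N)}"

definition weak_tuples :: "nat \<Rightarrow> nat \<Rightarrow> nat list set" where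
  "weak_tuples M l = {ns. length ns = l \<and> sorted ns \<and> (\<forall>n\<in>set ns. 0 < n \<and> n \<le> M)}"

definition mzv_weight :: "nat list \<Rightarrow> nat list \<Rightarrow> real" where
  "mzv_weight ks ms = (\<Prod>i<length ks. 1 / real (ms ! i) ^ (ks ! i))"

text \<open>\<open>Li^{(N)}_k(z)\<close> at \<open>z = N/(N-Y)\<close>, i.e. with \<open>N z^{-1} = N - Y\<close>, as a formal power
  series in \<open>Y\<close> (the factor \<open>1/(N-Y-m)_m\<close> is expanded as a power series in \<open>Y\<close>).\<close>
definition LiN_Y :: "nat \<Rightarrow> nat list \<Rightarrow> real fps" where
  "LiN_Y N ks = (\<Sum>ms\<in>incr_tuples N (length ks).
      fps_const (mzv_weight ks ms * pochhammer (real N - real (last ms)) (last ms))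
      * inverse (pochhammer (fps_const (real N) - fps_X - fps_const (real (last ms))) (last ms)))"

definition I0 :: "nat \<Rightarrow> nat \<Rightarrow> nat \<Rightarrow> nat list set" where
  "I0 k r h = {ks. length ks = r \<and> (\<forall>x\<in>set ks. 0 < x) \<and> 1 < last ks \<and> sum_list ks = k
                 \<and> length (filter (\<lambda>x. 1 < x) ks) = h}"

definition G0_Y :: "nat \<Rightarrow> nat \<Rightarrow> nat \<Rightarrow> nat \<Rightarrow> real fps" where
  "G0_Y N k r h = (\<Sum>ks\<in>I0 k r h. LiN_Y N ks)"

definition zeta_tilde :: "nat \<Rightarrow> nat list \<Rightarrow> nat \<Rightarrow> real" where
  "zeta_tilde N ks l = (\<Sum>ms\<in>incr_tuples N (length ks).
      mzv_weight ks ms * (\<Sum>ns\<in>weak_tuples (last ms) l. \<Prod>j<l. 1 / (real N - real (ns ! j))))"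

definition I0_tilde :: "nat \<Rightarrow> nat \<Rightarrow> nat \<Rightarrow> (nat list \<times> nat) set" where
  "I0_tilde k q h = {(ks, l). 0 < length ks \<and> (\<forall>x\<in>set ks. 0 < x) \<and> 1 < last ks
       \<and> sum_list ks + l = k \<and> length ks + l = q \<and> length (filter (\<lambda>x. 1 < x) ks) = h}"

text \<open>Trivariate formal power series in \<open>X,Y,Z\<close> are represented by their coefficient
  functions \<open>nat \<Rightarrow> nat \<Rightarrow> nat \<Rightarrow> real\<close> (\<open>c a b d\<close> = coefficient of \<open>X^a Y^b Z^d\<close>).
  \<open>gen_series F\<close> is the series \<open>\<Sum>_{k,r,h>0} F(k,r,h)(Y) X^{k-r-h} Y^{r-h} Z^{h-1}\<close>,
  where each \<open>F(k,r,h)\<close> is a power series in \<open>Y\<close>: the monomial \<open>X^a Y^b Z^d\<close> receives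
  contributions exactly from \<open>h = d+1\<close>, \<open>r = j+h\<close>, \<open>k = a+r+h\<close> with \<open>j \<le> b\<close>,
  via the coefficient of \<open>Y^{b-j}\<close> in \<open>F(k,r,h)\<close>.\<close>
definition gen_series :: "(nat \<Rightarrow> nat \<Rightarrow> nat \<Rightarrow> real fps) \<Rightarrow> nat \<Rightarrow> nat \<Rightarrow> nat \<Rightarrow> real" where
  "gen_series F a b d = (\<Sum>j\<le>b. fps_nth (F (a + (j + (d+1)) + (d+1)) (j + (d+1)) (d+1)) (b - j))"

definition Phi0_subst :: "nat \<Rightarrow> nat \<Rightarrow> nat \<Rightarrow> nat \<Rightarrow> real" where
  "Phi0_subst N = gen_series (\<lambda>k r h. G0_Y N k r h)"

definition Phi0_rhs :: "nat \<Rightarrow> nat \<Rightarrow> nat \<Rightarrow> nat \<Rightarrow> real" where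
  "Phi0_rhs N = gen_series (\<lambda>k q h. fps_const (\<Sum>(ks, l)\<in>I0_tilde k q h. zeta_tilde N ks l))"

end

(*
  Expanded in Y, (N-m)_m / (N-Y-m)_m is the product over n = 1..m of 1/(1 - Y/(N-n)), so its
  coefficient of Y^l is the complete homogeneous symmetric polynomial h_l(1/(N-1), ..., 1/(N-m)),
  which is exactly the inner sum over 0 < n_1 <= ... <= n_l <= m in zeta~. Hence the Y^l-coefficient
  of Li^(N)_k(N/(N-Y)) is zeta~^(N)(k; l). As X^(k-r-h) Y^(r-h) Z^(h-1) Y^l is the monomial attached
  to (k + l, r + l, h), the identity reduces to the fact that (k, l) |-> (k; l) maps the disjoint
  union over l of I_0(K - l, Q - l, h) bijectively onto I~_0(K, Q, h).
*)
theory Submission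
  imports Defs
begin

text \<open>\<open>complete_hom x m l\<close> is \<open>h_l(x 1, ..., x m)\<close>: the variables are indexed from 1.\<close>
fun complete_hom :: "(nat \<Rightarrow> 'a::comm_semiring_1) \<Rightarrow> nat \<Rightarrow> nat \<Rightarrow> 'a" where
  "complete_hom x m 0 = 1"
| "complete_hom x 0 (Suc l) = 0"
| "complete_hom x (Suc m) (Suc l) = complete_hom x m (Suc l) + x (Suc m) * complete_hom x (Suc m) l"

lemma finite_weak_tuples: "finite (weak_tuples m l)"
proof (rule finite_subset)
  show "weak_tuples m l \<subseteq> {ns. set ns \<subseteq> {0..m} \<and> length ns = l}"
    unfolding weak_tuples_def by auto
qed (rule finite_lists_length_eq, simp)

lemma weak_tuples_0_right: "weak_tuples m 0 = {[]}"
  unfolding weak_tuples_def by auto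

lemma weak_tuples_0_Suc: "weak_tuples 0 (Suc l) = {}"
  unfolding weak_tuples_def by (auto simp: length_Suc_conv)

lemma weak_tuples_Suc_Suc:
  "weak_tuples (Suc m) (Suc l) = weak_tuples m (Suc l) \<union> (\<lambda>ns. ns @ [Suc m]) ` weak_tuples (Suc m) l"
proof
  show "weak_tuples (Suc m) (Suc l) \<subseteq> weak_tuples m (Suc l) \<union> (\<lambda>ns. ns @ [Suc m]) ` weak_tuples (Suc m) l"
  proof
    fix ns assume ns: "ns \<in> weak_tuples (Suc m) (Suc l)"
    then have "ns \<noteq> []"
      unfolding weak_tuples_def by auto
    then obtain bs n where ns_eq: "ns = bs @ [n]"
      by (metis append_butlast_last_id)
    from ns have bs: "bs \<in> weak_tuples n l" and n: "0 < n" "n \<le> Suc m"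
      unfolding weak_tuples_def ns_eq by (auto simp: sorted_append)
    show "ns \<in> weak_tuples m (Suc l) \<union> (\<lambda>ns. ns @ [Suc m]) ` weak_tuples (Suc m) l"
    proof (cases "n = Suc m")
      case True
      with bs ns_eq show ?thesis by auto
    next
      case False
      with bs n have "ns \<in> weak_tuples m (Suc l)"
        unfolding weak_tuples_def ns_eq by (auto simp: sorted_append)
      then show ?thesis ..
    qed
  qed
qed (auto simp: weak_tuples_def sorted_append)

lemma sum_weak_tuples_prod_list:
  "(\<Sum>ns\<in>weak_tuples m l. prod_list (map x ns)) = complete_hom x m l"
proof (induction m arbitrary: l)
  case 0
  then show ?case by (cases l) (auto simp: weak_tuples_0_right weak_tuples_0_Suc)
next
  case (Suc m)
  note outer_IH = Suc.IH
  show ?case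
  proof (induction l)
    case 0
    then show ?case by (simp add: weak_tuples_0_right)
  next
    case (Suc l)
    have "weak_tuples m (Suc l) \<inter> (\<lambda>ns. ns @ [Suc m]) ` weak_tuples (Suc m) l = {}"
      unfolding weak_tuples_def by auto
    moreover have "inj_on (\<lambda>ns. ns @ [Suc m]) (weak_tuples (Suc m) l)"
      by (auto simp: inj_on_def)
    ultimately have "(\<Sum>ns\<in>weak_tuples (Suc m) (Suc l). prod_list (map x ns))
        = (\<Sum>ns\<in>weak_tuples m (Suc l). prod_list (map x ns))
          + x (Suc m) * (\<Sum>ns\<in>weak_tuples (Suc m) l. prod_list (map x ns))"
      unfolding weak_tuples_Suc_Suc
      by (simp add: sum.union_disjoint sum.reindex finite_weak_tuples sum_distrib_left mult.commute)
    also have "\<dots> = complete_hom x (Suc m) (Suc l)"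
      by (simp only: outer_IH Suc.IH complete_hom.simps)
    finally show ?case .
  qed
qed

lemma fps_complete_hom_Suc:
  fixes x :: "nat \<Rightarrow> 'a::comm_ring_1"
  shows "Abs_fps (complete_hom x (Suc m)) * (1 - fps_const (x (Suc m)) * fps_X)
       = Abs_fps (complete_hom x m)"
proof (rule fps_ext)
  fix n
  show "fps_nth (Abs_fps (complete_hom x (Suc m)) * (1 - fps_const (x (Suc m)) * fps_X)) n
      = fps_nth (Abs_fps (complete_hom x m)) n"
    by (cases n) (simp_all add: algebra_simps)
qed

lemma fps_complete_hom_times_prod:
  fixes x :: "nat \<Rightarrow> 'a::comm_ring_1"
  shows "Abs_fps (complete_hom x m) * (\<Prod>n\<in>{1..m}. 1 - fps_const (x n) * fps_X) = 1"
proof (induction m)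
  case 0
  have "Abs_fps (complete_hom x 0) = 1"
    by (rule fps_ext) (auto simp: gr0_conv_Suc)
  then show ?case by simp
next
  case (Suc m)
  have "Abs_fps (complete_hom x (Suc m)) * (\<Prod>n\<in>{1..Suc m}. 1 - fps_const (x n) * fps_X)
      = Abs_fps (complete_hom x (Suc m)) * (1 - fps_const (x (Suc m)) * fps_X)
        * (\<Prod>n\<in>{1..m}. 1 - fps_const (x n) * fps_X)"
    by (simp add: prod.nat_ivl_Suc' mult_ac del: complete_hom.simps)
  also have "\<dots> = 1"
    by (simp only: fps_complete_hom_Suc Suc.IH)
  finally show ?case .
qed

lemma inverse_prod_one_minus_fps_X:
  fixes x :: "nat \<Rightarrow> 'a::field"
  shows "inverse (\<Prod>n\<in>{1..m}. 1 - fps_const (x n) * fps_X) = Abs_fps (complete_hom x m)"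
  by (rule fps_inverse_unique, subst mult.commute) (rule fps_complete_hom_times_prod)

lemma pochhammer_const_minus_fps_X_eq_prod:
  fixes c :: "'a::field"
  assumes "\<forall>n\<in>{1..m}. c \<noteq> of_nat n"
  shows "pochhammer (fps_const c - fps_X - fps_const (of_nat m)) m
       = fps_const (pochhammer (c - of_nat m) m) * (\<Prod>n\<in>{1..m}. 1 - fps_const (1 / (c - of_nat n)) * fps_X)"
  using assms
proof (induction m)
  case 0
  then show ?case by simp
next
  case (Suc m)
  define d where "d = c - of_nat (Suc m)"
  let ?E = "\<lambda>n. 1 - fps_const (1 / (c - of_nat n)) * fps_X"
  have "d \<noteq> 0"
    using Suc.prems[rule_format, of "Suc m"] unfolding d_def by simp
  then have "fps_const d * ?E (Suc m) = fps_const d - fps_X"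
    unfolding d_def[symmetric] by (simp add: right_diff_distrib mult.assoc[symmetric])
  moreover have "fps_const c - fps_X - fps_const (of_nat (Suc m)) = fps_const d - fps_X"
    unfolding d_def by (rule fps_ext) simp
  ultimately have factor: "fps_const c - fps_X - fps_const (of_nat (Suc m)) = fps_const d * ?E (Suc m)"
    by simp
  have shift: "fps_const c - fps_X - fps_const (of_nat (Suc m)) + 1 = fps_const c - fps_X - fps_const (of_nat m)"
    by (rule fps_ext) simp
  have IH: "pochhammer (fps_const c - fps_X - fps_const (of_nat m)) m
      = fps_const (pochhammer (c - of_nat m) m) * (\<Prod>n\<in>{1..m}. ?E n)"
    using Suc by simp
  have pochhammer_Suc: "pochhammer (c - of_nat (Suc m)) (Suc m) = d * pochhammer (c - of_nat m) m"
    unfolding d_def pochhammer_rec by (simp add: algebra_simps)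
  have prod_Suc: "(\<Prod>n\<in>{1..Suc m}. ?E n) = ?E (Suc m) * (\<Prod>n\<in>{1..m}. ?E n)"
    by (rule prod.nat_ivl_Suc') simp
  have "pochhammer (fps_const c - fps_X - fps_const (of_nat (Suc m))) (Suc m)
      = fps_const d * ?E (Suc m) * pochhammer (fps_const c - fps_X - fps_const (of_nat m)) m"
    by (simp only: pochhammer_rec shift) (simp only: factor)
  also have "\<dots> = fps_const (pochhammer (c - of_nat (Suc m)) (Suc m)) * (\<Prod>n\<in>{1..Suc m}. ?E n)"
    by (simp only: IH pochhammer_Suc prod_Suc fps_const_mult[symmetric]) (simp only: mult_ac)
  finally show ?case .
qed

lemma pochhammer_ratio_fps_eq_complete_hom:
  fixes c :: "'a::field_char_0"
  assumes "\<forall>n\<in>{1..m}. c \<noteq> of_nat n"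
  shows "fps_const (pochhammer (c - of_nat m) m) * inverse (pochhammer (fps_const c - fps_X - fps_const (of_nat m)) m)
       = Abs_fps (complete_hom (\<lambda>n. 1 / (c - of_nat n)) m)"
proof -
  have "pochhammer (c - of_nat m) m \<noteq> 0"
  proof
    assume "pochhammer (c - of_nat m) m = 0"
    then obtain k where "k < m" "c - of_nat m = - of_nat k"
      by (auto simp: pochhammer_eq_0_iff)
    then have "c = of_nat m - of_nat k"
      by (simp add: eq_diff_eq diff_eq_eq)
    then have "c = of_nat (m - k)" and "m - k \<in> {1..m}"
      using \<open>k < m\<close> by (simp_all add: of_nat_diff)
    with assms show False by blast
  qed
  moreover have "inverse (pochhammer (fps_const c - fps_X - fps_const (of_nat m)) m)
      = fps_const (inverse (pochhammer (c - of_nat m) m)) * Abs_fps (complete_hom (\<lambda>n. 1 / (c - of_nat n)) m)"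
    by (simp only: pochhammer_const_minus_fps_X_eq_prod[OF assms] fps_inverse_mult fps_const_inverse
        inverse_prod_one_minus_fps_X)
  ultimately show ?thesis
    by (simp add: mult.assoc[symmetric])
qed

lemma prod_lessThan_nth_eq_prod_list:
  "length ns = l \<Longrightarrow> (\<Prod>j<l. f (ns ! j)) = prod_list (map f ns)"
  by (simp add: prod.list_conv_set_nth atLeast0LessThan)

lemma fps_nth_LiN_Y:
  assumes "ks \<noteq> []"
  shows "fps_nth (LiN_Y N ks) l = zeta_tilde N ks l"
  unfolding LiN_Y_def zeta_tilde_def fps_sum_nth
proof (rule sum.cong[OF refl])
  fix ms assume "ms \<in> incr_tuples N (length ks)"
  with assms have "ms \<noteq> []" and "\<forall>m\<in>set ms. m < N"
    unfolding incr_tuples_def by auto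
  then have "last ms < N"
    using last_in_set by blast
  then have "\<forall>n\<in>{1..last ms}. real N \<noteq> of_nat n"
    by auto
  note ratio = pochhammer_ratio_fps_eq_complete_hom[OF this]
  have weak_sum: "(\<Sum>ns\<in>weak_tuples (last ms) l. \<Prod>j<l. 1 / (real N - real (ns ! j)))
      = complete_hom (\<lambda>n. 1 / (real N - of_nat n)) (last ms) l"
  proof -
    have "(\<Sum>ns\<in>weak_tuples (last ms) l. \<Prod>j<l. 1 / (real N - real (ns ! j)))
        = (\<Sum>ns\<in>weak_tuples (last ms) l. prod_list (map (\<lambda>n. 1 / (real N - of_nat n)) ns))"
      by (intro sum.cong refl prod_lessThan_nth_eq_prod_list) (simp add: weak_tuples_def)
    then show ?thesis
      by (simp only: sum_weak_tuples_prod_list)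
  qed
  show "fps_nth (fps_const (mzv_weight ks ms * pochhammer (real N - real (last ms)) (last ms))
      * inverse (pochhammer (fps_const (real N) - fps_X - fps_const (real (last ms))) (last ms))) l
      = mzv_weight ks ms * (\<Sum>ns\<in>weak_tuples (last ms) l. \<Prod>j<l. 1 / (real N - real (ns ! j)))"
    by (simp only: fps_const_mult[symmetric] mult.assoc ratio fps_mult_left_const_nth fps_nth_Abs_fps weak_sum)
qed

lemma fps_nth_G0_Y:
  assumes "0 < r"
  shows "fps_nth (G0_Y N k r h) l = (\<Sum>ks\<in>I0 k r h. zeta_tilde N ks l)"
  unfolding G0_Y_def fps_sum_nth
  using assms by (intro sum.cong refl fps_nth_LiN_Y) (auto simp: I0_def)

lemma finite_I0: "finite (I0 k r h)"
proof (rule finite_subset)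
  show "I0 k r h \<subseteq> {ks. set ks \<subseteq> {0..k} \<and> length ks = r}"
    unfolding I0_def by (auto dest: member_le_sum_list)
qed (rule finite_lists_length_eq, simp)

lemma I0_tilde_eq_image_Sigma_I0:
  assumes "0 < h"
  shows "I0_tilde (a + (b + h) + h) (b + h) h
       = (\<lambda>(j, ks). (ks, b - j)) ` (SIGMA j:{..b}. I0 (a + (j + h) + h) (j + h) h)"
proof
  show "(\<lambda>(j, ks). (ks, b - j)) ` (SIGMA j:{..b}. I0 (a + (j + h) + h) (j + h) h)
      \<subseteq> I0_tilde (a + (b + h) + h) (b + h) h"
    using assms unfolding I0_def I0_tilde_def by auto
next
  show "I0_tilde (a + (b + h) + h) (b + h) h
      \<subseteq> (\<lambda>(j, ks). (ks, b - j)) ` (SIGMA j:{..b}. I0 (a + (j + h) + h) (j + h) h)"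
  proof
    fix p assume "p \<in> I0_tilde (a + (b + h) + h) (b + h) h"
    then obtain ks l where p: "p = (ks, l)" and ks: "0 < length ks" "\<forall>x\<in>set ks. 0 < x" "1 < last ks"
      "sum_list ks + l = a + (b + h) + h" "length ks + l = b + h"
      and h: "length (filter (\<lambda>x. 1 < x) ks) = h"
      unfolding I0_tilde_def by auto
    have "h \<le> length ks"
      using h length_filter_le by metis
    define j where "j = length ks - h"
    have j: "j \<le> b" "l = b - j" "length ks = j + h"
      using \<open>h \<le> length ks\<close> ks unfolding j_def by auto
    with ks h have "ks \<in> I0 (a + (j + h) + h) (j + h) h"
      unfolding I0_def by auto
    with p j show "p \<in> (\<lambda>(j, ks). (ks, b - j)) ` (SIGMA j:{..b}. I0 (a + (j + h) + h) (j + h) h)"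
      by (auto intro!: image_eqI[of _ _ "(j, ks)"])
  qed
qed

lemma sum_I0_tilde_eq_sum_I0:
  assumes "0 < h"
  shows "(\<Sum>(ks, l)\<in>I0_tilde (a + (b + h) + h) (b + h) h. f ks l)
       = (\<Sum>j\<le>b. \<Sum>ks\<in>I0 (a + (j + h) + h) (j + h) h. f ks (b - j))"
proof -
  have "inj_on (\<lambda>(j, ks). (ks, b - j)) (SIGMA j:{..b}. I0 (a + (j + h) + h) (j + h) h)"
    unfolding inj_on_def I0_def by auto
  then have "(\<Sum>(ks, l)\<in>I0_tilde (a + (b + h) + h) (b + h) h. f ks l)
      = (\<Sum>(j, ks)\<in>(SIGMA j:{..b}. I0 (a + (j + h) + h) (j + h) h). f ks (b - j))"
    unfolding I0_tilde_eq_image_Sigma_I0[OF assms] by (simp add: sum.reindex split_def)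
  also have "\<dots> = (\<Sum>j\<le>b. \<Sum>ks\<in>I0 (a + (j + h) + h) (j + h) h. f ks (b - j))"
    by (rule sum.Sigma[symmetric]) (auto simp: finite_I0)
  finally show ?thesis .
qed

lemma gen_series_fps_const:
  "gen_series (\<lambda>k q h. fps_const (g k q h)) a b d = g (a + (b + (d + 1)) + (d + 1)) (b + (d + 1)) (d + 1)"
proof -
  have "gen_series (\<lambda>k q h. fps_const (g k q h)) a b d
      = (\<Sum>j\<le>b. if j = b then g (a + (j + (d + 1)) + (d + 1)) (j + (d + 1)) (d + 1) else 0)"
    unfolding gen_series_def by (intro sum.cong refl) auto
  then show ?thesis
    by simp
qed

theorem proposition5p4:
  fixes N :: nat
  assumes "0 < N"
  shows "Phi0_subst N = Phi0_rhs N"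
proof (intro ext)
  fix a b d
  have "Phi0_subst N a b d
      = (\<Sum>j\<le>b. \<Sum>ks\<in>I0 (a + (j + (d + 1)) + (d + 1)) (j + (d + 1)) (d + 1). zeta_tilde N ks (b - j))"
    unfolding Phi0_subst_def gen_series_def by (intro sum.cong refl fps_nth_G0_Y) simp
  also have "\<dots> = (\<Sum>(ks, l)\<in>I0_tilde (a + (b + (d + 1)) + (d + 1)) (b + (d + 1)) (d + 1). zeta_tilde N ks l)"
    by (rule sum_I0_tilde_eq_sum_I0[symmetric]) simp
  also have "\<dots> = Phi0_rhs N a b d"
    unfolding Phi0_rhs_def gen_series_fps_const ..
  finally show "Phi0_subst N a b d = Phi0_rhs N a b d" .
qed

end
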